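(* A nondegenerate NSC $p$ satisfies Dissimilar Regularity if and only if it is an increasing NSC, i.e., it admits an NSC representation $(v,u,\{X_i\}_{i=1}^K)$ such that $v(A)\ge v(B)$ for every $i\le K$ and all nonempty $B\subseteq A\subseteq X_i$.
   Context: $X$ is a finite set, $\mathscr{A}$ the nonempty subsets; $p$ is a positive stochastic choice function; $A\cup y=A\cup\{y\}$. $a\sim_p b$ means $\frac{p(a,A)}{p(b,A)}=\frac{p(a,\{a,b\})}{p(b,\{a,b\})}$ for all $A\ni a,b$. NSC: there exist a partition $X_1,\dots,X_K$ of $X$, $u:X\to\mathbb{R}_{++}$, $v:\bigcup_i 2^{X_i}\to\mathbb{R}_+$ with $v(\emptyset)=0$, and $p(a,A)=\frac{v(A\cap X_i)}{\sum_j v(A\cap X_j)}\frac{u(a)}{\sum_{b\in A\cap X_i}u(b)}$ for $a\in A\cap X_i$. Nondegenerate: at most one $i$ for which some $a\in X_i$ satisfies $\frac{\sum_{x\in A_i}u(x)}{v(A_i)}=\frac{u(a)}{v(\{a\})}$ for all $A_i\subseteq X_i$ containing $a$. Dissimilar Regularity: for any $A\in\mathscr{A}$, $x\in A$ and $y\in X$ with $x\not\sim_p y$, $p(x,A\cup y)\le p(x,A)$. *)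

theory Defs
  imports Main "HOL-Library.Disjoint_Sets" Complex_Main
begin

definition pos_scf :: "'a set \<Rightarrow> ('a \<Rightarrow> 'a set \<Rightarrow> real) \<Rightarrow> bool" where
  "pos_scf X p \<longleftrightarrow> finite X \<and>
     (\<forall>A. A \<subseteq> X \<and> A \<noteq> {} \<longrightarrow> (\<forall>a\<in>A. p a A > 0) \<and> (\<Sum>a\<in>A. p a A) = 1)"

definition similar :: "'a set \<Rightarrow> ('a \<Rightarrow> 'a set \<Rightarrow> real) \<Rightarrow> 'a \<Rightarrow> 'a \<Rightarrow> bool" where
  "similar X p a b \<longleftrightarrow>
     (\<forall>A. A \<subseteq> X \<and> a \<in> A \<and> b \<in> A \<longrightarrow> p a A / p b A = p a {a, b} / p b {a, b})"

definition dissimilar_regularity :: "'a set \<Rightarrow> ('a \<Rightarrow> 'a set \<Rightarrow> real) \<Rightarrow> bool" where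
  "dissimilar_regularity X p \<longleftrightarrow>
     (\<forall>A x y. A \<subseteq> X \<and> A \<noteq> {} \<and> x \<in> A \<and> y \<in> X \<and> \<not> similar X p x y
        \<longrightarrow> p x (insert y A) \<le> p x A)"

text \<open>(v, u, P) is an NSC representation of p; the partition X_1..X_K is the
  set of blocks P, and v only matters on subsets of blocks.\<close>
definition nsc_rep :: "'a set \<Rightarrow> ('a \<Rightarrow> 'a set \<Rightarrow> real) \<Rightarrow> 'a set set
      \<Rightarrow> ('a \<Rightarrow> real) \<Rightarrow> ('a set \<Rightarrow> real) \<Rightarrow> bool" where
  "nsc_rep X p P u v \<longleftrightarrow>
     partition_on X P \<and>
     (\<forall>a\<in>X. u a > 0) \<and>
     v {} = 0 \<and>
     (\<forall>B\<in>P. \<forall>C. C \<subseteq> B \<longrightarrow> v C \<ge> 0) \<and>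
     (\<forall>A. A \<subseteq> X \<and> A \<noteq> {} \<longrightarrow> (\<forall>B\<in>P. \<forall>a\<in>A \<inter> B.
        p a A = v (A \<inter> B) / (\<Sum>C\<in>P. v (A \<inter> C)) * (u a / (\<Sum>b\<in>A \<inter> B. u b))))"

definition nsc_nondegenerate :: "'a set set \<Rightarrow> ('a \<Rightarrow> real) \<Rightarrow> ('a set \<Rightarrow> real) \<Rightarrow> bool" where
  "nsc_nondegenerate P u v \<longleftrightarrow>
     card {B \<in> P. \<exists>a\<in>B. \<forall>A. A \<subseteq> B \<and> a \<in> A \<longrightarrow>
            (\<Sum>x\<in>A. u x) / v A = u a / v {a}} \<le> 1"

definition nsc_increasing :: "'a set set \<Rightarrow> ('a set \<Rightarrow> real) \<Rightarrow> bool" where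
  "nsc_increasing P v \<longleftrightarrow>
     (\<forall>B\<in>P. \<forall>A C. C \<noteq> {} \<and> C \<subseteq> A \<and> A \<subseteq> B \<longrightarrow> v C \<le> v A)"

end

theory Submission
  imports Defs
begin

text \<open>On a menu meeting only two blocks, \<open>{x} \<subseteq> B\<close> and \<open>T \<subseteq> C\<close>, the representation gives
  \<open>p(x, x \<union> T) = v{x} / (v{x} + v T)\<close>. Two elements of the same block are always similar,
  while nondegeneracy forces elements of different blocks to be dissimilar: otherwise the ratio
  \<open>p(x,\<cdot>)/p(y,\<cdot>)\<close> on the menus \<open>x \<union> A\<close>, \<open>y \<in> A \<subseteq> C\<close>, makes \<open>(\<Sum>A u)/v A\<close> constant, i.e.
  both blocks are degenerate. Hence Dissimilar Regularity says exactly that adding an element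
  outside the block of \<open>x\<close> never decreases \<open>\<Sum>\<^sub>D v(A \<inter> D)\<close>; with a second block providing
  the outside element \<open>x\<close>, this is monotonicity of \<open>v\<close> on each block. With a single block
  \<open>v\<close> is irrelevant and can be replaced by an increasing one.\<close>

definition degenerate_block :: "('a \<Rightarrow> real) \<Rightarrow> ('a set \<Rightarrow> real) \<Rightarrow> 'a set \<Rightarrow> bool" where
  "degenerate_block u v B \<longleftrightarrow>
     (\<exists>a\<in>B. \<forall>A. A \<subseteq> B \<and> a \<in> A \<longrightarrow> (\<Sum>x\<in>A. u x) / v A = u a / v {a})"

lemma nsc_nondegenerate_iff:
  "nsc_nondegenerate P u v \<longleftrightarrow> card {B \<in> P. degenerate_block u v B} \<le> 1"
  unfolding nsc_nondegenerate_def degenerate_block_def ..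

lemma similar_sym:
  assumes "similar X p a b"
  shows "similar X p b a"
  unfolding similar_def
proof (intro allI impI)
  fix A assume "A \<subseteq> X \<and> b \<in> A \<and> a \<in> A"
  then have "p a A / p b A = p a {a, b} / p b {a, b}"
    using assms unfolding similar_def by blast
  then have "inverse (p a A / p b A) = inverse (p a {a, b} / p b {a, b})" by simp
  then show "p b A / p a A = p b {b, a} / p a {b, a}"
    by (simp add: insert_commute)
qed

lemma nsc_repD:
  assumes "nsc_rep X p P u v"
  shows "\<Union>P = X" "{} \<notin> P" "\<And>B C. B \<in> P \<Longrightarrow> C \<in> P \<Longrightarrow> B \<noteq> C \<Longrightarrow> B \<inter> C = {}"
    "\<And>a. a \<in> X \<Longrightarrow> u a > 0" "v {} = 0" "\<And>B C. B \<in> P \<Longrightarrow> C \<subseteq> B \<Longrightarrow> v C \<ge> 0"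
    "\<And>A B a. A \<subseteq> X \<Longrightarrow> A \<noteq> {} \<Longrightarrow> B \<in> P \<Longrightarrow> a \<in> A \<Longrightarrow> a \<in> B \<Longrightarrow>
        p a A = v (A \<inter> B) / (\<Sum>C\<in>P. v (A \<inter> C)) * (u a / (\<Sum>b\<in>A \<inter> B. u b))"
  using assms unfolding nsc_rep_def partition_on_def
  by (auto dest: disjointD)

lemma nsc_rep_finite:
  assumes "pos_scf X p" "nsc_rep X p P u v"
  shows "finite X" "finite P"
proof -
  show fX: "finite X" using assms(1) pos_scf_def by blast
  have "P \<subseteq> Pow X" using nsc_repD(1)[OF assms(2)] by blast
  then show "finite P" using fX finite_subset by blast
qed

lemma nsc_rep_pos:
  assumes "pos_scf X p" "nsc_rep X p P u v" "A \<subseteq> X" "B \<in> P" "a \<in> A" "a \<in> B"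
  shows "v (A \<inter> B) > 0" "(\<Sum>C\<in>P. v (A \<inter> C)) > 0" "(\<Sum>b\<in>A \<inter> B. u b) > 0"
proof -
  note R = nsc_repD[OF assms(2)]
  have A: "A \<noteq> {}" using assms(5) by blast
  have "p a A > 0" using assms(1,3,5) A unfolding pos_scf_def by blast
  moreover have "p a A = v (A \<inter> B) / (\<Sum>C\<in>P. v (A \<inter> C)) * (u a / (\<Sum>b\<in>A \<inter> B. u b))"
    using R(7) assms A by blast
  ultimately have "v (A \<inter> B) \<noteq> 0" "(\<Sum>C\<in>P. v (A \<inter> C)) \<noteq> 0" by auto
  moreover have "v (A \<inter> B) \<ge> 0" "(\<Sum>C\<in>P. v (A \<inter> C)) \<ge> 0"
    using R(6) assms(4) by (auto intro: sum_nonneg)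
  ultimately show "v (A \<inter> B) > 0" "(\<Sum>C\<in>P. v (A \<inter> C)) > 0" by linarith+
  have "finite (A \<inter> B)" using nsc_rep_finite(1)[OF assms(1,2)] assms(3) finite_subset by blast
  then show "(\<Sum>b\<in>A \<inter> B. u b) > 0" by (rule sum_pos) (use assms R(4) in auto)
qed

lemma nsc_rep_v_pos:
  assumes "pos_scf X p" "nsc_rep X p P u v" "B \<in> P" "T \<subseteq> B" "T \<noteq> {}"
  shows "v T > 0"
proof -
  obtain a where "a \<in> T" using assms(5) by blast
  moreover have "T \<subseteq> X" using nsc_repD(1)[OF assms(2)] assms(3,4) by blast
  ultimately have "v (T \<inter> B) > 0" using nsc_rep_pos(1)[OF assms(1,2) _ assms(3)] assms(4) by blast
  then show ?thesis using assms(4) by (simp add: Int_absorb2)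
qed

lemma nsc_rep_same_block_ratio:
  assumes "pos_scf X p" "nsc_rep X p P u v" "A \<subseteq> X" "x \<in> A" "y \<in> A"
    and "B \<in> P" "x \<in> B" "y \<in> B"
  shows "p x A / p y A = u x / u y"
proof -
  note R = nsc_repD[OF assms(2)]
  have "A \<noteq> {}" using assms(4) by blast
  then have px: "p x A = v (A \<inter> B) / (\<Sum>C\<in>P. v (A \<inter> C)) * (u x / (\<Sum>b\<in>A \<inter> B. u b))"
    and py: "p y A = v (A \<inter> B) / (\<Sum>C\<in>P. v (A \<inter> C)) * (u y / (\<Sum>b\<in>A \<inter> B. u b))"
    using R(7)[OF assms(3) _ assms(6)] assms by blast+
  have "u y > 0" using R(4) assms(3,5) by blast
  then show ?thesis
    unfolding px py using nsc_rep_pos[OF assms(1,2,3,6,4,7)] by (simp add: field_simps)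
qed

lemma nsc_rep_same_block_similar:
  assumes "pos_scf X p" "nsc_rep X p P u v" "B \<in> P" "x \<in> B" "y \<in> B"
  shows "similar X p x y"
proof -
  have "{x, y} \<subseteq> X" using nsc_repD(1)[OF assms(2)] assms(3-5) by blast
  then show ?thesis
    unfolding similar_def using nsc_rep_same_block_ratio[OF assms(1,2) _ _ _ assms(3-5)] by simp
qed

lemma nsc_rep_two_blocks:
  assumes "nsc_rep X p P u v" "finite P" "B \<in> P" "C \<in> P" "B \<noteq> C" "x \<in> B" "T \<subseteq> C"
  shows "p x (insert x T) = v {x} / (v {x} + v T)"
    "\<And>y. y \<in> T \<Longrightarrow> p y (insert x T) = v T / (v {x} + v T) * (u y / (\<Sum>b\<in>T. u b))"
proof -
  note R = nsc_repD[OF assms(1)]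
  have BC: "B \<inter> C = {}" using R(3) assms(3-5) by blast
  have iB: "insert x T \<inter> B = {x}" and iC: "insert x T \<inter> C = T" using BC assms(6,7) by blast+
  have "(\<Sum>D\<in>P. v (insert x T \<inter> D)) = (\<Sum>D\<in>{B, C}. v (insert x T \<inter> D))"
  proof (rule sum.mono_neutral_right)
    show "\<forall>D\<in>P - {B, C}. v (insert x T \<inter> D) = 0"
    proof
      fix D assume "D \<in> P - {B, C}"
      then have "insert x T \<inter> D = {}" using R(3) assms by blast
      then show "v (insert x T \<inter> D) = 0" using R(5) by simp
    qed
  qed (use assms in auto)
  also have "\<dots> = v {x} + v T" using assms(5) iB iC by simp
  finally have sum: "(\<Sum>D\<in>P. v (insert x T \<inter> D)) = v {x} + v T" .
  have sub: "insert x T \<subseteq> X" using R(1) assms(3,4,6,7) by blast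
  have "u x > 0" using R(4) sub by blast
  moreover have "p x (insert x T) = v (insert x T \<inter> B) / (\<Sum>D\<in>P. v (insert x T \<inter> D))
      * (u x / (\<Sum>b\<in>insert x T \<inter> B. u b))"
    using R(7)[OF sub _ assms(3)] assms(6) by blast
  ultimately show "p x (insert x T) = v {x} / (v {x} + v T)"
    unfolding sum iB by simp
  fix y assume "y \<in> T"
  then have "p y (insert x T) = v (insert x T \<inter> C) / (\<Sum>D\<in>P. v (insert x T \<inter> D))
      * (u y / (\<Sum>b\<in>insert x T \<inter> C. u b))"
    using R(7)[OF sub _ assms(4)] assms(7) by blast
  then show "p y (insert x T) = v T / (v {x} + v T) * (u y / (\<Sum>b\<in>T. u b))"
    unfolding sum iC .
qed

lemma nsc_rep_two_blocks_ratio: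
  assumes "pos_scf X p" "nsc_rep X p P u v" "B \<in> P" "C \<in> P" "B \<noteq> C" "x \<in> B" "T \<subseteq> C" "y \<in> T"
  shows "p x (insert x T) / p y (insert x T) = v {x} * (\<Sum>b\<in>T. u b) / (v T * u y)"
proof -
  have fP: "finite P" using nsc_rep_finite[OF assms(1,2)] by blast
  have "v {x} > 0" "v T > 0" using nsc_rep_v_pos[OF assms(1,2)] assms(3,4,6-8) by blast+
  moreover have "T \<subseteq> X" using nsc_repD(1)[OF assms(2)] assms(4,7) by blast
  then have "(\<Sum>b\<in>T. u b) > 0" "u y > 0"
    using nsc_rep_pos(3)[OF assms(1,2) _ assms(4) assms(8)] nsc_repD(4)[OF assms(2)] assms(7,8)
    by (auto simp: Int_absorb2)
  ultimately show ?thesis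
    unfolding nsc_rep_two_blocks[OF assms(2) fP assms(3-7)] nsc_rep_two_blocks(2)[OF assms(2) fP assms(3-8)]
    by (simp add: divide_simps)
qed

lemma similar_across_blocks_imp_degenerate:
  assumes "pos_scf X p" "nsc_rep X p P u v" "B \<in> P" "C \<in> P" "B \<noteq> C" "x \<in> B" "y \<in> C"
    and "similar X p x y"
  shows "degenerate_block u v C"
  unfolding degenerate_block_def
proof (intro bexI[OF _ assms(7)] allI impI)
  fix A assume A: "A \<subseteq> C \<and> y \<in> A"
  note ratio = nsc_rep_two_blocks_ratio[OF assms(1-6)]
  have "insert x A \<subseteq> X" using nsc_repD(1)[OF assms(2)] assms(3,4,6) A by blast
  then have "p x (insert x A) / p y (insert x A) = p x {x, y} / p y {x, y}"
    using assms(8) A unfolding similar_def by blast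
  then have eq: "v {x} * (\<Sum>b\<in>A. u b) / (v A * u y) = v {x} * u y / (v {y} * u y)"
    using ratio[of A y] ratio[of "{y}" y] A assms(7) by simp
  have "v {x} > 0" "v A > 0" "v {y} > 0"
    using nsc_rep_v_pos[OF assms(1,2)] assms(3,4,6,7) A by blast+
  moreover have "u y > 0" using nsc_repD(1,4)[OF assms(2)] assms(4,7) by blast
  ultimately show "(\<Sum>x\<in>A. u x) / v A = u y / v {y}"
    using eq by (simp add: divide_simps)
qed

lemma nondegenerate_imp_dissimilar_across_blocks:
  assumes "pos_scf X p" "nsc_rep X p P u v" "nsc_nondegenerate P u v"
    and "B \<in> P" "C \<in> P" "B \<noteq> C" "x \<in> B" "y \<in> C"
  shows "\<not> similar X p x y"
proof
  assume "similar X p x y"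
  then have "degenerate_block u v C" "degenerate_block u v B"
    using similar_across_blocks_imp_degenerate[OF assms(1,2)] similar_sym assms(4-8) by metis+
  then have "{B, C} \<subseteq> {D \<in> P. degenerate_block u v D}" using assms(4,5) by blast
  then have "card {B, C} \<le> card {D \<in> P. degenerate_block u v D}"
    using nsc_rep_finite(2)[OF assms(1,2)] by (intro card_mono) auto
  then show False using assms(3,6) unfolding nsc_nondegenerate_iff by simp
qed

lemma insert_mono_imp_subset_mono:
  fixes v :: "'a set \<Rightarrow> real"
  assumes "finite B" and step: "\<And>T y. T \<subseteq> B \<Longrightarrow> y \<in> B \<Longrightarrow> y \<notin> T \<Longrightarrow> v T \<le> v (insert y T)"
    and "C \<subseteq> A" "A \<subseteq> B"
  shows "v C \<le> v A"
proof -
  have "finite (A - C)" using assms(1,4) finite_subset by blast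
  moreover have "\<And>F. finite F \<Longrightarrow> F \<subseteq> B \<Longrightarrow> v C \<le> v (C \<union> F)"
  proof -
    fix F :: "'a set" assume "finite F" "F \<subseteq> B"
    then show "v C \<le> v (C \<union> F)"
    proof (induction F rule: finite_induct)
      case (insert z F)
      then have "v C \<le> v (C \<union> F)" by blast
      moreover have "v (C \<union> F) \<le> v (C \<union> insert z F)"
      proof (cases "z \<in> C \<union> F")
        case False
        then show ?thesis using step[of "C \<union> F" z] insert.prems assms(3,4) by auto
      qed (simp add: insert_absorb)
      ultimately show ?case by linarith
    qed simp
  qed
  ultimately have "v C \<le> v (C \<union> (A - C))" using assms(4) by blast
  moreover have "C \<union> (A - C) = A" using assms(3) by blast
  ultimately show ?thesis by simp
qed

lemma nsc_increasing_sum_blocks_mono: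
  assumes "nsc_rep X p P u v" "nsc_increasing P v"
  shows "(\<Sum>D\<in>P. v (A \<inter> D)) \<le> (\<Sum>D\<in>P. v (insert y A \<inter> D))"
proof (rule sum_mono)
  fix D assume D: "D \<in> P"
  show "v (A \<inter> D) \<le> v (insert y A \<inter> D)"
  proof (cases "A \<inter> D = {}")
    case True
    then show ?thesis using nsc_repD(5)[OF assms(1)] nsc_repD(6)[OF assms(1) D, of "insert y A \<inter> D"] by simp
  next
    case False
    then show ?thesis
      using assms(2)[unfolded nsc_increasing_def, rule_format, OF D, of "A \<inter> D" "insert y A \<inter> D"]
      by blast
  qed
qed

lemma nsc_increasing_imp_dissimilar_regularity:
  assumes pos: "pos_scf X p" and rep: "nsc_rep X p P u v" and inc: "nsc_increasing P v"
  shows "dissimilar_regularity X p"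
  unfolding dissimilar_regularity_def
proof (intro allI impI)
  fix A x y assume H: "A \<subseteq> X \<and> A \<noteq> {} \<and> x \<in> A \<and> y \<in> X \<and> \<not> similar X p x y"
  note R = nsc_repD[OF rep]
  obtain B where B: "B \<in> P" "x \<in> B" using R(1) H by blast
  have yB: "y \<notin> B" using nsc_rep_same_block_similar[OF pos rep B] H by blast
  then have same: "insert y A \<inter> B = A \<inter> B" by blast
  have old: "p x A = v (A \<inter> B) / (\<Sum>D\<in>P. v (A \<inter> D)) * (u x / (\<Sum>b\<in>A \<inter> B. u b))"
    using R(7)[of A B x] H B by blast
  have "p x (insert y A) = v (insert y A \<inter> B) / (\<Sum>D\<in>P. v (insert y A \<inter> D))
      * (u x / (\<Sum>b\<in>insert y A \<inter> B. u b))"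
    using R(7)[of "insert y A" B x] H B by blast
  then have new: "p x (insert y A)
      = v (A \<inter> B) / (\<Sum>D\<in>P. v (insert y A \<inter> D)) * (u x / (\<Sum>b\<in>A \<inter> B. u b))"
    unfolding same .
  have "v (A \<inter> B) / (\<Sum>D\<in>P. v (insert y A \<inter> D)) \<le> v (A \<inter> B) / (\<Sum>D\<in>P. v (A \<inter> D))"
    using nsc_rep_pos(1,2)[OF pos rep _ B(1) _ B(2), of A] H
      nsc_increasing_sum_blocks_mono[OF rep inc, of A y]
    by (intro divide_left_mono) auto
  moreover have "u x / (\<Sum>b\<in>A \<inter> B. u b) \<ge> 0"
  proof -
    have "u x > 0" "(\<Sum>b\<in>A \<inter> B. u b) > 0"
      using R(4) nsc_rep_pos(3)[OF pos rep _ B(1) _ B(2), of A] H by auto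
    then show ?thesis by simp
  qed
  ultimately show "p x (insert y A) \<le> p x A"
    unfolding old new by (rule mult_right_mono)
qed

lemma dissimilar_regularity_imp_insert_mono:
  assumes pos: "pos_scf X p" and rep: "nsc_rep X p P u v" and nd: "nsc_nondegenerate P u v"
    and DR: "dissimilar_regularity X p"
    and B: "B \<in> P" "B' \<in> P" "B' \<noteq> B" and T: "T \<subseteq> B" "y \<in> B"
  shows "v T \<le> v (insert y T)"
proof -
  note R = nsc_repD[OF rep]
  obtain x where x: "x \<in> B'" using R(2) B(2) by (metis all_not_in_conv)
  have "\<not> similar X p x y"
    using nondegenerate_imp_dissimilar_across_blocks[OF pos rep nd B(2,1,3) x T(2)] .
  moreover have "insert x T \<subseteq> X" "y \<in> X" using R(1) B T x by blast+
  ultimately have "p x (insert y (insert x T)) \<le> p x (insert x T)"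
    using DR unfolding dissimilar_regularity_def by blast
  moreover have "insert y (insert x T) = insert x (insert y T)" by blast
  moreover note nsc_rep_two_blocks(1)[OF rep nsc_rep_finite(2)[OF pos rep] B(2,1,3) x]
  ultimately have "v {x} / (v {x} + v (insert y T)) \<le> v {x} / (v {x} + v T)"
    using T by simp
  moreover have "v {x} > 0" using nsc_rep_v_pos[OF pos rep B(2)] x by blast
  moreover have "v T \<ge> 0" "v (insert y T) \<ge> 0" using R(6)[OF B(1)] T by auto
  ultimately show ?thesis by (simp add: divide_simps)
qed

lemma nsc_rep_single_block_change_v:
  assumes "pos_scf X p" "nsc_rep X p {X} u v"
    and "w {} = 0" "\<And>S. S \<subseteq> X \<Longrightarrow> w S \<ge> 0" "\<And>S. S \<subseteq> X \<Longrightarrow> S \<noteq> {} \<Longrightarrow> w S > 0"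
  shows "nsc_rep X p {X} u w"
  unfolding nsc_rep_def
proof (intro conjI allI impI ballI)
  note R = nsc_repD[OF assms(2)]
  show "partition_on X {X}" using assms(2) nsc_rep_def by blast
  show "\<And>a. a \<in> X \<Longrightarrow> u a > 0" using R(4) .
  fix A B a assume A: "A \<subseteq> X \<and> A \<noteq> {}" and B: "B \<in> {X}" and a: "a \<in> A \<inter> B"
  have "A \<inter> X = A" using A by blast
  moreover have "v A > 0" "w A > 0"
    using nsc_rep_v_pos[OF assms(1,2), of X A] assms(5) A by auto
  moreover have "p a A = v (A \<inter> X) / (\<Sum>C\<in>{X}. v (A \<inter> C)) * (u a / (\<Sum>b\<in>A \<inter> X. u b))"
    using R(7)[of A X a] A a by blast
  ultimately show "p a A = w (A \<inter> B) / (\<Sum>C\<in>{X}. w (A \<inter> C)) * (u a / (\<Sum>b\<in>A \<inter> B. u b))"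
    using B by simp
qed (use assms(3,4) in auto)

theorem proposition8:
  fixes X :: "'a set" and p :: "'a \<Rightarrow> 'a set \<Rightarrow> real"
  assumes "pos_scf X p"
    and "\<exists>P u v. nsc_rep X p P u v \<and> nsc_nondegenerate P u v"
  shows "dissimilar_regularity X p \<longleftrightarrow>
           (\<exists>P u v. nsc_rep X p P u v \<and> nsc_increasing P v)"
proof
  assume DR: "dissimilar_regularity X p"
  obtain P u v where rep: "nsc_rep X p P u v" and nd: "nsc_nondegenerate P u v"
    using assms(2) by blast
  show "\<exists>P u v. nsc_rep X p P u v \<and> nsc_increasing P v"
  proof (cases "\<exists>C\<in>P. \<forall>B\<in>P. B = C")
    case True
    then obtain C where "P = {C}" by blast
    then have "P = {X}" using nsc_repD(1)[OF rep] by simp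
    then have "nsc_rep X p P u (\<lambda>S. of_bool (S \<noteq> {}))"
      using nsc_rep_single_block_change_v[OF assms(1)] rep by simp
    moreover have "nsc_increasing P (\<lambda>S. of_bool (S \<noteq> {}))"
      unfolding nsc_increasing_def by auto
    ultimately show ?thesis by blast
  next
    case False
    have "nsc_increasing P v"
      unfolding nsc_increasing_def
    proof (intro ballI allI impI)
      fix B A C assume B: "B \<in> P" and CA: "C \<noteq> {} \<and> C \<subseteq> A \<and> A \<subseteq> B"
      obtain B' where B': "B' \<in> P" "B' \<noteq> B" using False B by metis
      have "B \<subseteq> X" using nsc_repD(1)[OF rep] B by blast
      then have "finite B" using nsc_rep_finite(1)[OF assms(1) rep] finite_subset by blast
      then show "v C \<le> v A"
        using insert_mono_imp_subset_mono[of B v C A] CA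
          dissimilar_regularity_imp_insert_mono[OF assms(1) rep nd DR B B']
        by blast
    qed
    with rep show ?thesis by blast
  qed
next
  assume "\<exists>P u v. nsc_rep X p P u v \<and> nsc_increasing P v"
  then show "dissimilar_regularity X p"
    using nsc_increasing_imp_dissimilar_regularity[OF assms(1)] by blast
qed

end
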